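(* Let $f\in C^2(\mathbb{R}^d)$ with $\nabla f$ globally $L$-Lipschitz, $h>0$, $\beta\ge0$, $c\le\gamma_k\le C$ ($0<c\le C$), and $\beta+\frac h2<\frac cL$. Let $(x_k)$ be generated by $y_k=x_k+\alpha_k(x_k-x_{k-1})$, $x_{k+1}=y_k-s_k\nabla f(x_k+\frac\beta h(x_k-x_{k-1}))$ ($k\ge1$) with $\alpha_k=\frac1{1+\gamma_kh}$, $s_k=h^2\alpha_k$. Let $v_k=x_k-x_{k-1}$, $\tilde\alpha=\frac{\beta L}h+\frac1{h^2}$, and $V_k=f(x_k)+\frac{\tilde\alpha}2\|v_k\|^2$. Then for every $k\ge1$, $$V_{k+1}\le V_k-\delta\|v_{k+1}\|^2,\qquad\delta=\frac ch-\frac L2-\frac{\beta L}h>0.$$ *)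

theory Defs
  imports "HOL-Analysis.Analysis"
begin

end

theory Submission
  imports Defs
begin

text \<open>
  The descent lemma bounds the decrease of f along the step w = x(k+1) - x(k) by the inner
  product of w with the gradient at x(k); Lipschitz continuity moves this gradient to the
  extrapolated point where the scheme evaluates it, and the recursion expresses that
  gradient through v and w. Young's inequality then leaves a kinetic term in v, which
  V absorbs, and a multiple of -|w|^2 whose coefficient is negative exactly when
  \<beta> + h/2 < c/L.
\<close>

lemma lipschitz_gradient_descent:
  fixes f :: "'a::real_inner \<Rightarrow> real" and g :: "'a \<Rightarrow> 'a"
  assumes grad: "\<And>z. (f has_derivative (\<lambda>v. g z \<bullet> v)) (at z)"
    and lip: "\<And>y z. norm (g y - g z) \<le> L * norm (y - z)"
  shows "f y \<le> f x + g x \<bullet> (y - x) + L / 2 * (norm (y - x))\<^sup>2"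
proof -
  define d where "d = y - x"
  define \<phi> where "\<phi> t = f (x + t *\<^sub>R d) - t * (g x \<bullet> d) - L / 2 * t\<^sup>2 * (norm d)\<^sup>2" for t
  have \<phi>_deriv: "DERIV \<phi> t :> ((g (x + t *\<^sub>R d) - g x) \<bullet> d - L * t * (norm d)\<^sup>2)" for t
  proof -
    have "((\<lambda>t. x + t *\<^sub>R d) has_derivative (\<lambda>s. s *\<^sub>R d)) (at t)"
      by (auto intro!: derivative_eq_intros)
    from has_derivative_compose[OF this grad]
    have f_deriv: "((\<lambda>t. f (x + t *\<^sub>R d)) has_real_derivative (g (x + t *\<^sub>R d) \<bullet> d)) (at t)"
      unfolding has_field_derivative_def
      by (simp add: mult.commute[of _ "g (x + t *\<^sub>R d) \<bullet> d"])
    show ?thesis unfolding \<phi>_def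
      by (rule derivative_eq_intros f_deriv | simp)+ (simp add: inner_diff_left algebra_simps power2_eq_square)
  qed
  have "\<phi> 1 \<le> \<phi> 0"
  proof (rule DERIV_nonpos_imp_nonincreasing[of 0 1])
    fix t :: real assume t: "0 \<le> t" "t \<le> 1"
    have "(g (x + t *\<^sub>R d) - g x) \<bullet> d \<le> norm (g (x + t *\<^sub>R d) - g x) * norm d"
      by (rule norm_cauchy_schwarz)
    also have "\<dots> \<le> L * norm (t *\<^sub>R d) * norm d"
      using lip[of "x + t *\<^sub>R d" x] by (intro mult_right_mono) auto
    also have "\<dots> = L * t * (norm d)\<^sup>2"
      using t by (simp add: power2_eq_square)
    finally have "(g (x + t *\<^sub>R d) - g x) \<bullet> d - L * t * (norm d)\<^sup>2 \<le> 0"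
      by simp
    with \<phi>_deriv show "\<exists>y. DERIV \<phi> t :> y \<and> y \<le> 0"
      by blast
  qed simp
  then show ?thesis unfolding \<phi>_def d_def by simp
qed

lemma inner_le_half_sum_squares:
  fixes v w :: "'a::real_inner"
  shows "v \<bullet> w \<le> ((norm v)\<^sup>2 + (norm w)\<^sup>2) / 2"
    and "norm v * norm w \<le> ((norm v)\<^sup>2 + (norm w)\<^sup>2) / 2"
proof -
  show *: "norm v * norm w \<le> ((norm v)\<^sup>2 + (norm w)\<^sup>2) / 2"
    using sum_squares_bound[of "norm v" "norm w"] by simp
  show "v \<bullet> w \<le> ((norm v)\<^sup>2 + (norm w)\<^sup>2) / 2"
    using norm_cauchy_schwarz[of v w] * by linarith
qed

lemma inertial_step_gradient_inner_le:
  fixes v w G :: "'a::real_inner"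
  assumes h: "h > 0" and c: "0 \<le> c" and \<gamma>: "c \<le> \<gamma>"
    and step: "w = (1 / (1 + \<gamma> * h)) *\<^sub>R v - (h\<^sup>2 * (1 / (1 + \<gamma> * h))) *\<^sub>R G"
  shows "h\<^sup>2 * (G \<bullet> w) \<le> ((norm v)\<^sup>2 - (norm w)\<^sup>2) / 2 - c * h * (norm w)\<^sup>2"
proof -
  have "1 + \<gamma> * h > 0"
    using c \<gamma> h by (smt (verit) mult_nonneg_nonneg)
  then have "(1 + \<gamma> * h) *\<^sub>R w = v - h\<^sup>2 *\<^sub>R G"
    unfolding step scaleR_diff_right scaleR_scaleR by simp
  then have G_eq: "h\<^sup>2 *\<^sub>R G = v - (1 + \<gamma> * h) *\<^sub>R w"
    by (simp add: algebra_simps)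
  have "h\<^sup>2 * (G \<bullet> w) = (v - (1 + \<gamma> * h) *\<^sub>R w) \<bullet> w"
    by (simp flip: G_eq)
  also have "\<dots> = v \<bullet> w - (norm w)\<^sup>2 - \<gamma> * h * (norm w)\<^sup>2"
    by (simp add: inner_diff_left power2_norm_eq_inner algebra_simps)
  also have "\<dots> \<le> ((norm v)\<^sup>2 - (norm w)\<^sup>2) / 2 - c * h * (norm w)\<^sup>2"
  proof -
    have "c * h * (norm w)\<^sup>2 \<le> \<gamma> * h * (norm w)\<^sup>2"
      using \<gamma> h by (intro mult_right_mono) auto
    then show ?thesis
      using inner_le_half_sum_squares(1)[of v w] by (simp add: field_simps)
  qed
  finally show ?thesis .
qed

lemma inertial_gradient_energy_step:
  fixes f :: "'a::real_inner \<Rightarrow> real" and g :: "'a \<Rightarrow> 'a"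
  assumes grad: "\<And>z. (f has_derivative (\<lambda>v. g z \<bullet> v)) (at z)"
    and lip: "\<And>y z. norm (g y - g z) \<le> L * norm (y - z)"
    and L: "L \<ge> 0" and h: "h > 0" and \<beta>: "\<beta> \<ge> 0" and c: "c \<ge> 0" and \<gamma>: "c \<le> \<gamma>"
    and next_point: "x' = (x + (1 / (1 + \<gamma> * h)) *\<^sub>R (x - x0))
                   - (h\<^sup>2 * (1 / (1 + \<gamma> * h))) *\<^sub>R g (x + (\<beta> / h) *\<^sub>R (x - x0))"
  defines "\<alpha> \<equiv> \<beta> * L / h + 1 / h\<^sup>2"
  shows "f x' + \<alpha> / 2 * (norm (x' - x))\<^sup>2
       \<le> f x + \<alpha> / 2 * (norm (x - x0))\<^sup>2 - (c / h - L / 2 - \<beta> * L / h) * (norm (x' - x))\<^sup>2"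
proof -
  define v where "v = x - x0"
  define w where "w = x' - x"
  define G where "G = g (x + (\<beta> / h) *\<^sub>R v)"
  define nv where "nv = (norm v)\<^sup>2"
  define nw where "nw = (norm w)\<^sup>2"
  have f_step: "f x' \<le> f x + g x \<bullet> w + L / 2 * nw"
    using lipschitz_gradient_descent[of f g L x' x, OF grad lip] by (simp add: w_def nw_def)
  have "(g x - G) \<bullet> w \<le> norm (g x - G) * norm w"
    by (rule norm_cauchy_schwarz)
  also have "\<dots> \<le> L * norm (x - (x + (\<beta> / h) *\<^sub>R v)) * norm w"
    using lip[of x "x + (\<beta> / h) *\<^sub>R v"] unfolding G_def by (intro mult_right_mono) auto
  also have "\<dots> = \<beta> * L / h * (norm v * norm w)"
    using h \<beta> by simp
  also have "\<dots> \<le> \<beta> * L / h * ((nv + nw) / 2)"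
    using inner_le_half_sum_squares(2)[of v w] L h \<beta>
    by (intro mult_left_mono) (auto simp: nv_def nw_def)
  finally have g_shift: "g x \<bullet> w \<le> G \<bullet> w + \<beta> * L / h * ((nv + nw) / 2)"
    by (simp add: inner_diff_left)
  have "h\<^sup>2 * (G \<bullet> w) \<le> (nv - nw) / 2 - c * h * nw"
    unfolding nv_def nw_def
    by (rule inertial_step_gradient_inner_le[OF h c \<gamma>])
      (use next_point in \<open>simp add: v_def w_def G_def\<close>)
  then have G_w: "G \<bullet> w \<le> ((nv - nw) / 2 - c * h * nw) / h\<^sup>2"
    using h by (simp add: pos_le_divide_eq mult.commute)
  have "((nv - nw) / 2 - c * h * nw) / h\<^sup>2 + \<beta> * L / h * ((nv + nw) / 2) + L / 2 * nw + \<alpha> / 2 * nw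
        = \<alpha> / 2 * nv - (c / h - L / 2 - \<beta> * L / h) * nw"
    unfolding \<alpha>_def using h by (simp add: field_simps power2_eq_square)
  with f_step g_shift G_w show ?thesis
    unfolding v_def w_def nv_def nw_def by linarith
qed

theorem mainTheorem16:
  fixes f :: "'a::euclidean_space \<Rightarrow> real"
    and g :: "'a \<Rightarrow> 'a"
    and H :: "'a \<Rightarrow> 'a \<Rightarrow>\<^sub>L 'a"
    and x :: "nat \<Rightarrow> 'a"
    and \<gamma> :: "nat \<Rightarrow> real"
    and L h \<beta> c C :: real
  assumes grad: "\<And>z. (f has_derivative (\<lambda>v. g z \<bullet> v)) (at z)"
    and hess: "\<And>z. (g has_derivative blinfun_apply (H z)) (at z)"
    and hess_cont: "continuous_on UNIV H"
    and Lpos: "L > 0"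
    and lip: "\<And>y z. norm (g y - g z) \<le> L * norm (y - z)"
    and hpos: "h > 0" and bnn: "\<beta> \<ge> 0"
    and cpos: "0 < c" and cC: "c \<le> C"
    and gam: "\<And>k. k \<ge> 1 \<Longrightarrow> c \<le> \<gamma> k \<and> \<gamma> k \<le> C"
    and step: "\<beta> + h / 2 < c / L"
    and rec: "\<And>k. k \<ge> 1 \<Longrightarrow>
       x (k + 1) = (x k + (1 / (1 + \<gamma> k * h)) *\<^sub>R (x k - x (k - 1)))
                   - (h\<^sup>2 * (1 / (1 + \<gamma> k * h))) *\<^sub>R
                       g (x k + (\<beta> / h) *\<^sub>R (x k - x (k - 1)))"
  shows "let v = (\<lambda>k. x k - x (k - 1));
             \<alpha>t = \<beta> * L / h + 1 / h\<^sup>2;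
             V = (\<lambda>k. f (x k) + \<alpha>t / 2 * (norm (v k))\<^sup>2);
             \<delta> = c / h - L / 2 - \<beta> * L / h
         in \<delta> > 0 \<and> (\<forall>k\<ge>1. V (k + 1) \<le> V k - \<delta> * (norm (v (k + 1)))\<^sup>2)"
proof -
  have "0 < (c - (\<beta> + h / 2) * L) / h"
    using step Lpos hpos by (simp add: pos_less_divide_eq)
  also have "\<dots> = c / h - L / 2 - \<beta> * L / h"
    using hpos by (simp add: field_simps)
  finally have "c / h - L / 2 - \<beta> * L / h > 0" .
  moreover have "f (x (k + 1)) + (\<beta> * L / h + 1 / h\<^sup>2) / 2 * (norm (x (k + 1) - x k))\<^sup>2
      \<le> f (x k) + (\<beta> * L / h + 1 / h\<^sup>2) / 2 * (norm (x k - x (k - 1)))\<^sup>2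
         - (c / h - L / 2 - \<beta> * L / h) * (norm (x (k + 1) - x k))\<^sup>2" if "k \<ge> 1" for k
    using gam[OF that] cpos Lpos
    by (intro inertial_gradient_energy_step[OF grad lip _ hpos bnn _ _ rec[OF that]]) auto
  ultimately show ?thesis by simp
qed

end
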